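(* Let $(X,\mu)$ be a non-atomic probability measure space, $\mathcal{T}$ a tree on $X$, $\mathcal{M}=\mathcal{M}_{\mathcal{T}}$ the associated maximal operator, $p>1$, $k=p/(p-1)$, $F>0$ and $0<f\le kF$. Let $$B_1(f,F)=\sup\Big\{\|\mathcal{M}\phi\|_{p,\infty} : \phi\ge0,\ \int_X\phi\,d\mu=f,\ \|\phi\|_{p,\infty}=F\Big\}.$$ Then $B_1(f,F)=kF$.
   Context: A tree on $(X,\mu)$ is a set $\mathcal{T}$ of measurable subsets of $X$ such that: (i) $X\in\mathcal{T}$ and $\mu(I)>0$ for every $I\in\mathcal{T}$; (ii) every $I\in\mathcal{T}$ has an associated finite subset $\mathcal{C}(I)\subseteq\mathcal{T}$ with at least two elements, whose elements are pairwise almost disjoint (i.e. intersections have measure zero) subsets of $I$ with union $I$; (iii) $\mathcal{T}=\bigcup_{m\ge0}\mathcal{T}_{(m)}$ where $\mathcal{T}_{(0)}=\{X\}$ and $\mathcal{T}_{(m+1)}=\bigcup_{I\in\mathcal{T}_{(m)}}\mathcal{C}(I)$; (iv) $\lim_{m\to\infty}\sup_{I\in\mathcal{T}_{(m)}}\mu(I)=0$. The associated maximal operator is $\mathcal{M}_{\mathcal{T}}\phi(x)=\sup\{\frac{1}{\mu(I)}\int_I|\phi|\,d\mu : x\in I\in\mathcal{T}\}$ for $\phi\in L^1(X,\mu)$. $\|g\|_{p,\infty}=\sup\{\lambda\,\mu(\{|g|>\lambda\})^{1/p}:\lambda>0\}$. *)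

theory Defs
  imports "HOL-Probability.Probability"
begin

definition nonatomic :: "'a measure \<Rightarrow> bool" where
  "nonatomic M \<longleftrightarrow>
     (\<forall>A\<in>sets M. 0 < emeasure M A \<longrightarrow>
        (\<exists>B\<in>sets M. B \<subseteq> A \<and> 0 < emeasure M B \<and> emeasure M B < emeasure M A))"

primrec tree_level :: "'a set \<Rightarrow> ('a set \<Rightarrow> 'a set set) \<Rightarrow> nat \<Rightarrow> 'a set set" where
  "tree_level X C 0 = {X}"
| "tree_level X C (Suc m) = \<Union> (C ` tree_level X C m)"

definition is_tree :: "'a measure \<Rightarrow> 'a set set \<Rightarrow> ('a set \<Rightarrow> 'a set set) \<Rightarrow> bool" where
  "is_tree M T C \<longleftrightarrow>
     space M \<in> T \<and>
     (\<forall>I\<in>T. I \<in> sets M \<and> 0 < measure M I) \<and>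
     (\<forall>I\<in>T. finite (C I) \<and> 2 \<le> card (C I) \<and> C I \<subseteq> T \<and>
        (\<forall>J1\<in>C I. \<forall>J2\<in>C I. J1 \<noteq> J2 \<longrightarrow> measure M (J1 \<inter> J2) = 0) \<and>
        (\<forall>J\<in>C I. J \<subseteq> I) \<and> \<Union> (C I) = I) \<and>
     T = (\<Union>m. tree_level (space M) C m) \<and>
     (\<lambda>m. SUP I\<in>tree_level (space M) C m. measure M I) \<longlonglongrightarrow> 0"

definition tree_maximal :: "'a measure \<Rightarrow> 'a set set \<Rightarrow> ('a \<Rightarrow> real) \<Rightarrow> 'a \<Rightarrow> ennreal" where
  "tree_maximal M T \<phi> x =
     (SUP I\<in>{I\<in>T. x \<in> I}. ennreal ((LINT y:I|M. \<bar>\<phi> y\<bar>) / measure M I))"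

text \<open>Weak L^p quasi-norm of an [0,\<infinity>]-valued function:
  sup over \<lambda>>0 of \<lambda> \<mu>({|g|>\<lambda>})^(1/p).  (M is finite in our application.)\<close>
definition weak_norm :: "'a measure \<Rightarrow> real \<Rightarrow> ('a \<Rightarrow> ennreal) \<Rightarrow> ennreal" where
  "weak_norm M p g =
     (SUP t\<in>{0<..}. ennreal (t * (measure M {x\<in>space M. ennreal t < g x}) powr (1 / p)))"

end

theory Submission
  imports Defs
begin

text \<open>
  Upper bound: by a Calder\'on--Zygmund stopping-time argument the level set \<open>{\<M>\<phi> > t}\<close>
  is an increasing union of almost disjoint unions \<open>G\<close> of tree nodes with \<open>t \<mu>(G) \<le> \<integral>\<^sub>G \<phi>\<close>,
  while the layer-cake formula and the weak-norm bound \<open>\<mu>{\<phi> > s} \<le> (F/s)^p\<close> give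
  \<open>\<integral>\<^sub>G \<phi> \<le> kF \<mu>(G)^{1-1/p}\<close>; hence \<open>t \<mu>(G)^{1/p} \<le> kF\<close>.

  Lower bound (sharpness): non-atomicity yields a uniformly distributed variable \<open>u\<close>
  whose initial segment \<open>{u < \<mu>(I)}\<close> is a prescribed tree node \<open>I\<close> of small measure.
  The extremal function \<open>F u^{-1/p}\<close> on \<open>{u < a}\<close> has distribution \<open>min(a, (F/s)^p)\<close>,
  hence integral \<open>kF a^{1-1/p} = f\<close> and weak norm \<open>F\<close>, and its average over \<open>I\<close> is at
  least \<open>kF \<mu>(I)^{-1/p}\<close>, so \<open>\<parallel>\<M>\<phi>\<parallel>\<^sub>p\<^sub>,\<^sub>\<infinity> \<ge> kF\<close>.
\<close>

context finite_measure
begin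

lemma nonatomic_halving:
  assumes na: "nonatomic M" and A: "A \<in> sets M" "0 < measure M A"
  shows "\<exists>B\<in>sets M. B \<subseteq> A \<and> 0 < measure M B \<and> measure M B \<le> measure M A / 2"
proof -
  from na A obtain B where B: "B \<in> sets M" "B \<subseteq> A" "0 < emeasure M B" "emeasure M B < emeasure M A"
    unfolding nonatomic_def by (auto simp: emeasure_eq_measure)
  hence B': "0 < measure M B" "measure M B < measure M A"
    by (auto simp: emeasure_eq_measure ennreal_less_iff)
  have diff: "measure M (A - B) = measure M A - measure M B"
    using B A by (simp add: finite_measure_Diff)
  show ?thesis
  proof (cases "measure M B \<le> measure M A / 2")
    case True
    with B B' show ?thesis by blast
  next
    case False
    with diff B' B A show ?thesis by (intro bexI[of _ "A - B"]) auto
  qed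
qed

lemma nonatomic_small_subset:
  assumes na: "nonatomic M" and A: "A \<in> sets M" "0 < measure M A" and e: "0 < e"
  shows "\<exists>B\<in>sets M. B \<subseteq> A \<and> 0 < measure M B \<and> measure M B \<le> e"
proof -
  have halved: "\<exists>B\<in>sets M. B \<subseteq> A \<and> 0 < measure M B \<and> measure M B \<le> measure M A / 2 ^ n" for n
  proof (induction n)
    case 0
    then show ?case using A by auto
  next
    case (Suc n)
    then obtain B where B: "B \<in> sets M" "B \<subseteq> A" "0 < measure M B"
      "measure M B \<le> measure M A / 2 ^ n" by blast
    obtain D where D: "D \<in> sets M" "D \<subseteq> B" "0 < measure M D" "measure M D \<le> measure M B / 2"
      using nonatomic_halving[OF na B(1,3)] by blast
    have "measure M D * 2 ^ Suc n \<le> measure M B * 2 ^ n"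
      using D(4) by (simp add: field_simps)
    also have "\<dots> \<le> measure M A"
      using B(4) by (simp add: field_simps)
    finally have "measure M D \<le> measure M A / 2 ^ Suc n"
      by (simp add: field_simps)
    then show ?case using B D by (intro bexI[of _ D]) auto
  qed
  obtain n where "(1/2::real) ^ n < e / measure M A"
    using real_arch_pow_inv[of "e / measure M A" "1/2"] e A by auto
  hence "measure M A / 2 ^ n \<le> e" using A by (simp add: field_simps power_divide)
  with halved[of n] show ?thesis by (meson order_trans)
qed

text \<open>One step of the greedy exhaustion: given \<open>B\<close> of measure at most \<open>t\<close>, choose
  \<open>C \<subseteq> A - B\<close> keeping the total below \<open>t\<close> and at least half as large as any
  admissible competitor.\<close>
lemma greedy_step:
  assumes A: "A \<in> sets M" and B: "B \<in> sets M" "measure M B \<le> t"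
  shows "\<exists>C. C \<in> sets M \<and> C \<subseteq> A - B \<and> measure M B + measure M C \<le> t \<and>
          (\<forall>D\<in>sets M. D \<subseteq> A - B \<and> measure M B + measure M D \<le> t \<longrightarrow> measure M D \<le> 2 * measure M C)"
proof -
  define S where "S = {measure M D | D. D \<in> sets M \<and> D \<subseteq> A - B \<and> measure M B + measure M D \<le> t}"
  have bdd: "bdd_above S"
    unfolding S_def by (rule bdd_aboveI[of _ "t - measure M B"]) auto
  have zero: "0 \<in> S"
    unfolding S_def using B by (auto intro!: exI[of _ "{}"])
  have upper: "measure M D \<le> Sup S"
    if "D \<in> sets M" "D \<subseteq> A - B" "measure M B + measure M D \<le> t" for D
    using that bdd by (intro cSup_upper) (auto simp: S_def)
  show ?thesis
  proof (cases "Sup S \<le> 0")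
    case True
    have "measure M D \<le> 2 * measure M {}"
      if "D \<in> sets M" "D \<subseteq> A - B" "measure M B + measure M D \<le> t" for D
      using upper[OF that] True by simp
    then show ?thesis using B by (intro exI[of _ "{}"]) auto
  next
    case False
    then obtain x where "x \<in> S" "Sup S / 2 < x"
      using less_cSup_iff[of S "Sup S / 2"] bdd zero by auto
    then obtain C where C: "C \<in> sets M" "C \<subseteq> A - B" "measure M B + measure M C \<le> t"
      and half: "Sup S < 2 * measure M C"
      unfolding S_def by auto
    have "measure M D \<le> 2 * measure M C"
      if "D \<in> sets M" "D \<subseteq> A - B" "measure M B + measure M D \<le> t" for D
      using upper[OF that] half by simp
    then show ?thesis using C by blast
  qed
qed

text \<open>The greedy exhaustion of \<open>greedy_step\<close> converges
  to a subset of measure exactly \<open>t\<close>.\<close>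
lemma nonatomic_exact_subset:
  assumes na: "nonatomic M" and A: "A \<in> sets M" and t: "0 \<le> t" "t \<le> measure M A"
  shows "\<exists>B\<in>sets M. B \<subseteq> A \<and> measure M B = t"
proof -
  define good where "good B C \<longleftrightarrow> C \<in> sets M \<and> C \<subseteq> A - B \<and>
      measure M B + measure M C \<le> t \<and>
      (\<forall>D\<in>sets M. D \<subseteq> A - B \<and> measure M B + measure M D \<le> t \<longrightarrow> measure M D \<le> 2 * measure M C)"
    for B C
  define c where "c B = (SOME C. good B C)" for B
  have c_good: "good B (c B)" if "B \<in> sets M" "measure M B \<le> t" for B
    unfolding c_def by (rule someI_ex) (use greedy_step[OF A that] in \<open>simp only: good_def\<close>)
  define Bs where "Bs n = ((\<lambda>B. B \<union> c B) ^^ n) {}" for n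
  have Bs_Suc: "Bs (Suc n) = Bs n \<union> c (Bs n)" for n
    by (simp add: Bs_def)
  have inv: "Bs n \<in> sets M \<and> Bs n \<subseteq> A \<and> measure M (Bs n) \<le> t" for n
  proof (induction n)
    case 0
    then show ?case using t by (simp add: Bs_def)
  next
    case (Suc n)
    then have "Bs n \<in> sets M" "measure M (Bs n) \<le> t" by simp_all
    note cn = c_good[OF this, unfolded good_def]
    then have "measure M (Bs (Suc n)) = measure M (Bs n) + measure M (c (Bs n))"
      using Suc unfolding Bs_Suc by (intro finite_measure_Union) auto
    then show ?case using Suc cn by (auto simp: Bs_Suc)
  qed
  have step: "c (Bs n) \<in> sets M \<and> c (Bs n) \<subseteq> A - Bs n \<and>
      (\<forall>D\<in>sets M. D \<subseteq> A - Bs n \<and> measure M (Bs n) + measure M D \<le> t \<longrightarrow>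
         measure M D \<le> 2 * measure M (c (Bs n)))" for n
  proof -
    have "Bs n \<in> sets M" "measure M (Bs n) \<le> t" using inv[of n] by simp_all
    from c_good[OF this] show ?thesis unfolding good_def by simp
  qed
  define B where "B = (\<Union>n. Bs n)"
  have B: "B \<in> sets M" "B \<subseteq> A" using inv by (auto simp: B_def)
  have lim: "(\<lambda>n. measure M (Bs n)) \<longlonglongrightarrow> measure M B"
    unfolding B_def using inv by (intro finite_Lim_measure_incseq) (auto intro!: incseq_SucI simp: Bs_Suc)
  have "(\<lambda>n. measure M (Bs (Suc n)) - measure M (Bs n)) \<longlonglongrightarrow> measure M B - measure M B"
    using tendsto_diff[OF LIMSEQ_Suc[OF lim] lim] .
  moreover have "measure M (Bs (Suc n)) - measure M (Bs n) = measure M (c (Bs n))" for n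
    using step[of n] inv[of n] unfolding Bs_Suc by (subst finite_measure_Union) auto
  ultimately have steps_vanish: "(\<lambda>n. measure M (c (Bs n))) \<longlonglongrightarrow> 0" by simp
  have B_le: "measure M B \<le> t"
    using inv by (intro LIMSEQ_le_const2[OF lim]) auto
  show ?thesis
  proof (cases "measure M B < t")
    case False
    then show ?thesis using B_le B by (intro bexI[of _ B]) auto
  next
    case True
    have "measure M (A - B) = measure M A - measure M B"
      using B A by (simp add: finite_measure_Diff)
    then have "0 < measure M (A - B)" using True t by simp
    then obtain D where D: "D \<in> sets M" "D \<subseteq> A - B" "0 < measure M D" "measure M D \<le> t - measure M B"
      using nonatomic_small_subset[OF na _ _, of "A - B" "t - measure M B"] True A B by auto
    obtain n where n: "measure M (c (Bs n)) < measure M D / 2"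
      using steps_vanish D(3)
      by (metis LIMSEQ_D abs_of_nonneg diff_zero half_gt_zero measure_nonneg order_refl real_norm_def)
    have "Bs n \<subseteq> B" by (auto simp: B_def)
    then have "measure M (Bs n) \<le> measure M B"
      using B by (intro finite_measure_mono) auto
    then have "D \<subseteq> A - Bs n \<and> measure M (Bs n) + measure M D \<le> t"
      using D \<open>Bs n \<subseteq> B\<close> by auto
    text \<open>So \<open>D\<close> was admissible at stage \<open>n\<close>, and the greedy choice there was not too small.\<close>
    then have "measure M D \<le> 2 * measure M (c (Bs n))"
      using step[of n] D(1) by blast
    with n show ?thesis by linarith
  qed
qed

end

text \<open>A measurable set between \<open>S\<close> and \<open>T\<close> whose measure is the average of theirs;
  in a non-atomic space it exists by \<open>nonatomic_exact_subset\<close>.\<close>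
definition halfway :: "'a measure \<Rightarrow> 'a set \<Rightarrow> 'a set \<Rightarrow> 'a set" where
  "halfway M S T = S \<union>
     (SOME B. B \<in> sets M \<and> B \<subseteq> T - S \<and> measure M B = (measure M T - measure M S) / 2)"

text \<open>Dyadic chains in \<open>A\<close>: \<open>dyadic_sets M A n j\<close>, \<open>j \<le> 2^n\<close>, is an increasing chain
  from \<open>{}\<close> to \<open>A\<close> of sets of measure \<open>j/2^n\<close> times that of \<open>A\<close>; level \<open>n+1\<close>
  refines level \<open>n\<close> by inserting halfway sets.\<close>
primrec dyadic_sets :: "'a measure \<Rightarrow> 'a set \<Rightarrow> nat \<Rightarrow> nat \<Rightarrow> 'a set" where
  "dyadic_sets M A 0 = (\<lambda>j. if j = 0 then {} else A)"
| "dyadic_sets M A (Suc n) = (\<lambda>i. if even i then dyadic_sets M A n (i div 2)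
      else halfway M (dyadic_sets M A n (i div 2)) (dyadic_sets M A n (i div 2 + 1)))"

context finite_measure
begin

lemma halfway:
  assumes na: "nonatomic M" and ST: "S \<in> sets M" "T \<in> sets M" "S \<subseteq> T"
  shows "halfway M S T \<in> sets M \<and> S \<subseteq> halfway M S T \<and> halfway M S T \<subseteq> T \<and>
         measure M (halfway M S T) = (measure M S + measure M T) / 2"
proof -
  have diff: "measure M (T - S) = measure M T - measure M S"
    using ST by (simp add: finite_measure_Diff)
  have "measure M S \<le> measure M T" using ST by (simp add: finite_measure_mono)
  then obtain B0 where "B0 \<in> sets M" "B0 \<subseteq> T - S" "measure M B0 = (measure M T - measure M S) / 2"
    using nonatomic_exact_subset[OF na, of "T - S" "(measure M T - measure M S) / 2"] ST diff by auto
  then have "\<exists>B. B \<in> sets M \<and> B \<subseteq> T - S \<and> measure M B = (measure M T - measure M S) / 2"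
    by blast
  from someI_ex[OF this] obtain B where B: "B \<in> sets M" "B \<subseteq> T - S"
      "measure M B = (measure M T - measure M S) / 2" and eq: "halfway M S T = S \<union> B"
    unfolding halfway_def by auto
  have "measure M (S \<union> B) = measure M S + measure M B"
    using B ST by (intro finite_measure_Union) auto
  also have "\<dots> = (measure M S + measure M T) / 2"
    using B(3) by (simp add: field_simps)
  finally show ?thesis using B ST eq by auto
qed

lemma dyadic_sets:
  assumes na: "nonatomic M" and A: "A \<in> sets M"
  shows "(\<forall>j\<le>2^n. dyadic_sets M A n j \<in> sets M \<and> dyadic_sets M A n j \<subseteq> A \<and>
            measure M (dyadic_sets M A n j) = real j * measure M A / 2^n) \<and>
         (\<forall>j<2^n. dyadic_sets M A n j \<subseteq> dyadic_sets M A n (Suc j))"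
proof (induction n)
  case 0
  then show ?case using A by auto
next
  case (Suc n)
  let ?D = "dyadic_sets M A n"
  have mid: "halfway M (?D j) (?D (Suc j)) \<in> sets M \<and> ?D j \<subseteq> halfway M (?D j) (?D (Suc j)) \<and>
      halfway M (?D j) (?D (Suc j)) \<subseteq> ?D (Suc j) \<and>
      measure M (halfway M (?D j) (?D (Suc j))) = (measure M (?D j) + measure M (?D (Suc j))) / 2"
    if "j < 2^n" for j
    using Suc that by (intro halfway[OF na]) auto
  have sets: "dyadic_sets M A (Suc n) i \<in> sets M \<and> dyadic_sets M A (Suc n) i \<subseteq> A \<and>
      measure M (dyadic_sets M A (Suc n) i) = real i * measure M A / 2^Suc n"
    if i: "i \<le> 2^Suc n" for i
  proof (cases "even i")
    case True
    then obtain j where j: "i = 2 * j" by blast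
    with i Suc have "?D j \<in> sets M" "?D j \<subseteq> A" "measure M (?D j) = real j * measure M A / 2^n"
      by auto
    then show ?thesis using j by (simp add: field_simps)
  next
    case False
    then obtain j where j: "i = 2 * j + 1" using oddE by blast
    with i have jl: "j < 2^n" by simp
    have eq: "dyadic_sets M A (Suc n) i = halfway M (?D j) (?D (Suc j))"
      using j by simp
    have mj: "measure M (?D j) = real j * measure M A / 2^n"
      "measure M (?D (Suc j)) = real (Suc j) * measure M A / 2^n" "?D (Suc j) \<subseteq> A"
      using Suc jl by auto
    have "measure M (halfway M (?D j) (?D (Suc j))) = real i * measure M A / 2^Suc n"
      using mid[OF jl] mj(1,2) j by (simp add: field_simps)
    then show ?thesis using mid[OF jl] mj(3) unfolding eq by blast
  qed
  have chain: "dyadic_sets M A (Suc n) i \<subseteq> dyadic_sets M A (Suc n) (Suc i)"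
    if i: "i < 2^Suc n" for i
  proof (cases "even i")
    case True
    then obtain j where j: "i = 2 * j" by blast
    with i have "j < 2^n" by simp
    then show ?thesis using mid j by simp
  next
    case False
    then obtain j where j: "i = 2 * j + 1" using oddE by blast
    with i have "j < 2^n" by simp
    moreover have "Suc i div 2 = Suc j" using j by simp
    ultimately show ?thesis using mid j by simp
  qed
  show ?case using sets chain by blast
qed

lemma dyadic_sets_mono:
  assumes na: "nonatomic M" and A: "A \<in> sets M" and jj: "j \<le> j'" "j' \<le> 2^n"
  shows "dyadic_sets M A n j \<subseteq> dyadic_sets M A n j'"
  using jj
proof (induction j' rule: dec_induct)
  case base
  then show ?case by simp
next
  case (step m)
  then have "m < 2^n" by simp
  then have "dyadic_sets M A n m \<subseteq> dyadic_sets M A n (Suc m)"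
    using dyadic_sets[OF na A, of n] by blast
  moreover have "dyadic_sets M A n j \<subseteq> dyadic_sets M A n m"
    using step.IH \<open>m < 2^n\<close> by simp
  ultimately show ?case by blast
qed

end

definition dyadic_below :: "real \<Rightarrow> real \<Rightarrow> nat \<Rightarrow> nat" where
  "dyadic_below \<alpha> b n = Max {j. j \<le> 2^n \<and> real j * \<alpha> / 2^n < b}"

lemma dyadic_below:
  assumes "0 < b"
  shows "dyadic_below \<alpha> b n \<le> 2^n" "real (dyadic_below \<alpha> b n) * \<alpha> / 2^n < b"
    and "j \<le> 2^n \<Longrightarrow> real j * \<alpha> / 2^n < b \<Longrightarrow> j \<le> dyadic_below \<alpha> b n"
proof -
  let ?Q = "{j. j \<le> 2^n \<and> real j * \<alpha> / 2^n < b}"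
  have "finite ?Q" "0 \<in> ?Q" using assms by auto
  then have "dyadic_below \<alpha> b n \<in> ?Q" unfolding dyadic_below_def by (intro Max_in) auto
  then show "dyadic_below \<alpha> b n \<le> 2^n" "real (dyadic_below \<alpha> b n) * \<alpha> / 2^n < b" by auto
  show "j \<le> dyadic_below \<alpha> b n" if "j \<le> 2^n" "real j * \<alpha> / 2^n < b"
    unfolding dyadic_below_def using \<open>finite ?Q\<close> that by (intro Max_ge) auto
qed

text \<open>The next grid point is already at or above \<open>b\<close>, so the grid point below \<open>b\<close> is
  within \<open>\<alpha> / 2^n\<close> of it.\<close>
lemma dyadic_below_gap:
  assumes "0 < b" "b \<le> \<alpha>"
  shows "b - \<alpha> / 2^n \<le> real (dyadic_below \<alpha> b n) * \<alpha> / 2^n"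
proof -
  let ?J = "dyadic_below \<alpha> b n"
  have "?J \<noteq> 2^n" using dyadic_below(2)[OF assms(1), of \<alpha> n] assms by auto
  then have "Suc ?J \<le> 2^n" using dyadic_below(1)[OF assms(1), of \<alpha> n] by simp
  have "\<not> real (Suc ?J) * \<alpha> / 2^n < b"
  proof
    assume "real (Suc ?J) * \<alpha> / 2^n < b"
    then have "Suc ?J \<le> ?J"
      using dyadic_below(3)[OF assms(1), where j = "Suc ?J" and \<alpha> = \<alpha> and n = n] \<open>Suc ?J \<le> 2^n\<close> by blast
    then show False by simp
  qed
  moreover have "real (Suc ?J) * \<alpha> / 2^n = real ?J * \<alpha> / 2^n + \<alpha> / 2^n"
    by (simp add: field_simps)
  ultimately show ?thesis by linarith
qed

text \<open>Refining the grid moves the index below \<open>b\<close> upwards: index \<open>2j\<close> at level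
  \<open>n+1\<close> is the grid point of index \<open>j\<close> at level \<open>n\<close>.\<close>
lemma dyadic_below_Suc:
  assumes "0 < b"
  shows "2 * dyadic_below \<alpha> b n \<le> dyadic_below \<alpha> b (Suc n)"
proof (rule dyadic_below(3)[OF assms])
  show "2 * dyadic_below \<alpha> b n \<le> 2 ^ Suc n"
    using dyadic_below(1)[OF assms, of \<alpha> n] by simp
  have "real (2 * dyadic_below \<alpha> b n) * \<alpha> / 2 ^ Suc n = real (dyadic_below \<alpha> b n) * \<alpha> / 2^n"
    by simp
  then show "real (2 * dyadic_below \<alpha> b n) * \<alpha> / 2 ^ Suc n < b"
    using dyadic_below(2)[OF assms, of \<alpha> n] by simp
qed

context finite_measure
begin

lemma dyadic_approx:
  assumes na: "nonatomic M" and A: "A \<in> sets M" and b: "0 < b" "b \<le> measure M A"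
  defines "K \<equiv> \<lambda>n. dyadic_sets M A n (dyadic_below (measure M A) b n)"
  shows "range K \<subseteq> sets M" "incseq K" "(\<lambda>n. measure M (K n)) \<longlonglongrightarrow> b"
proof -
  let ?\<alpha> = "measure M A" and ?J = "dyadic_below (measure M A) b"
  have K: "K n \<in> sets M" "measure M (K n) = real (?J n) * ?\<alpha> / 2^n" for n
    using dyadic_sets[OF na A, of n] dyadic_below(1)[OF b(1)] by (auto simp: K_def)
  then show "range K \<subseteq> sets M" by auto
  show "incseq K"
  proof (rule incseq_SucI)
    fix n
    have "K n = dyadic_sets M A (Suc n) (2 * ?J n)" by (simp add: K_def)
    also have "\<dots> \<subseteq> K (Suc n)"
      unfolding K_def using dyadic_below_Suc[OF b(1)] dyadic_below(1)[OF b(1)]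
      by (intro dyadic_sets_mono[OF na A])
    finally show "K n \<subseteq> K (Suc n)" .
  qed
  have "(\<lambda>n. ?\<alpha> / 2^n) \<longlonglongrightarrow> 0"
    by (rule LIMSEQ_divide_realpow_zero) simp
  then have "(\<lambda>n. b - ?\<alpha> / 2^n) \<longlonglongrightarrow> b - 0"
    by (intro tendsto_intros)
  moreover have "\<forall>\<^sub>F n in sequentially. b - ?\<alpha> / 2^n \<le> measure M (K n)"
    using K(2) dyadic_below_gap[OF b] by (intro always_eventually allI) simp
  moreover have "\<forall>\<^sub>F n in sequentially. measure M (K n) \<le> b"
    using K(2) dyadic_below(2)[OF b(1)] by (intro always_eventually allI less_imp_le) simp
  ultimately show "(\<lambda>n. measure M (K n)) \<longlonglongrightarrow> b"
    using tendsto_sandwich[OF _ _ _ tendsto_const] by fastforce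
qed

end

definition dyadic_rank :: "'a measure \<Rightarrow> 'a set \<Rightarrow> 'a \<Rightarrow> real" where
  "dyadic_rank M A x =
     measure M A * Inf {real j / 2^n | n j. j \<le> 2^n \<and> x \<in> dyadic_sets M A n j}"

context finite_measure
begin

lemma dyadic_rank_bounds:
  assumes x: "x \<in> A"
  shows "0 \<le> dyadic_rank M A x" "dyadic_rank M A x \<le> measure M A"
proof -
  let ?W = "{real j / 2^n | n j. j \<le> 2^n \<and> x \<in> dyadic_sets M A n j}"
  have one: "1 \<in> ?W" using x by (intro CollectI exI[of _ 0] exI[of _ "1::nat"]) auto
  have "bdd_below ?W" by (rule bdd_belowI[of _ 0]) auto
  then have "0 \<le> Inf ?W" "Inf ?W \<le> 1"
    using one by (auto intro!: cInf_greatest cInf_lower)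
  then show "0 \<le> dyadic_rank M A x" "dyadic_rank M A x \<le> measure M A"
    unfolding dyadic_rank_def by (auto intro: mult_left_le)
qed

lemma dyadic_rank_less:
  assumes na: "nonatomic M" and A: "A \<in> sets M" and b: "0 < b" "b \<le> measure M A"
  shows "{x\<in>A. dyadic_rank M A x < b} = (\<Union>n. dyadic_sets M A n (dyadic_below (measure M A) b n))"
proof -
  let ?\<alpha> = "measure M A" and ?J = "dyadic_below (measure M A) b"
  let ?W = "\<lambda>x. {real j / 2^n | n j. j \<le> 2^n \<and> x \<in> dyadic_sets M A n j}"
  have \<alpha>: "0 < ?\<alpha>" using b by simp
  have bdd: "bdd_below (?W x)" for x by (rule bdd_belowI[of _ 0]) auto
  have rank: "dyadic_rank M A x < b \<longleftrightarrow> Inf (?W x) < b / ?\<alpha>" for x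
    using \<alpha> by (simp add: dyadic_rank_def field_simps)
  show ?thesis
  proof (intro equalityI subsetI)
    fix x assume x: "x \<in> {x\<in>A. dyadic_rank M A x < b}"
    then have "1 \<in> ?W x" by (intro CollectI exI[of _ 0] exI[of _ "1::nat"]) auto
    then obtain w where "w \<in> ?W x" "w < b / ?\<alpha>"
      using x rank cInf_less_iff[OF _ bdd] by blast
    then obtain n j where nj: "j \<le> 2^n" "x \<in> dyadic_sets M A n j" "real j / 2^n < b / ?\<alpha>"
      by blast
    moreover have "real j * ?\<alpha> / 2^n < b"
      using nj(3) \<alpha> by (simp add: field_simps)
    ultimately have "dyadic_sets M A n j \<subseteq> dyadic_sets M A n (?J n)"
      using dyadic_below[OF b(1)] by (intro dyadic_sets_mono[OF na A]) auto
    with nj show "x \<in> (\<Union>n. dyadic_sets M A n (?J n))" by blast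
  next
    fix x assume "x \<in> (\<Union>n. dyadic_sets M A n (?J n))"
    then obtain n where n: "x \<in> dyadic_sets M A n (?J n)" by blast
    then have xA: "x \<in> A" using dyadic_sets[OF na A, of n] dyadic_below(1)[OF b(1)] by blast
    have "real (?J n) / 2^n \<in> ?W x" using n dyadic_below(1)[OF b(1)] by blast
    then have "Inf (?W x) \<le> real (?J n) / 2^n" using bdd by (intro cInf_lower)
    also have "\<dots> < b / ?\<alpha>" using dyadic_below(2)[OF b(1), of ?\<alpha> n] \<alpha> by (simp add: field_simps)
    finally show "x \<in> {x\<in>A. dyadic_rank M A x < b}" using xA rank by blast
  qed
qed

lemma uniform_on_set:
  assumes na: "nonatomic M" and A: "A \<in> sets M"
  shows "\<exists>v\<in>borel_measurable M. (\<forall>x\<in>A. 0 \<le> v x \<and> v x \<le> measure M A) \<and>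
           (\<forall>b. 0 \<le> b \<and> b \<le> measure M A \<longrightarrow> measure M {x\<in>A. v x < b} = b)"
proof -
  define v where "v x = (if x \<in> A then dyadic_rank M A x else 0)" for x
  have bounds: "0 \<le> v x" "v x \<le> measure M A" if "x \<in> A" for x
    using dyadic_rank_bounds[OF that] that by (simp_all add: v_def)
  have level: "{x\<in>A. v x < b} = (\<Union>n. dyadic_sets M A n (dyadic_below (measure M A) b n))"
    if "0 < b" "b \<le> measure M A" for b
    using dyadic_rank_less[OF na A that] by (auto simp: v_def)
  have level_sets: "{x\<in>A. v x < b} \<in> sets M" for b
  proof -
    consider "b \<le> 0" | "0 < b" "b \<le> measure M A" | "measure M A < b" by linarith
    then show ?thesis
    proof cases
      case 1
      then have "{x\<in>A. v x < b} = {}" using bounds by force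
      then show ?thesis by (metis sets.empty_sets)
    next
      case 2
      then show ?thesis unfolding level[OF 2] using dyadic_approx(1)[OF na A 2] by auto
    next
      case 3
      then have "{x\<in>A. v x < b} = A" using bounds by force
      then show ?thesis using A by simp
    qed
  qed
  have "v \<in> borel_measurable M"
  proof (subst borel_measurable_iff_less, intro allI)
    fix b :: real
    have "{x\<in>space M. v x < b} = {x\<in>A. v x < b} \<union> {x\<in>space M - A. 0 < b}"
      using sets.sets_into_space[OF A] by (auto simp: v_def)
    moreover have "{x\<in>space M - A. 0 < b} \<in> sets M" using A by (cases "0 < b") auto
    ultimately show "{x\<in>space M. v x < b} \<in> sets M" using level_sets by simp
  qed
  moreover have "measure M {x\<in>A. v x < b} = b" if b: "0 \<le> b" "b \<le> measure M A" for b
  proof (cases "b = 0")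
    case True
    then have "{x\<in>A. v x < b} = {}" using bounds by force
    then show ?thesis using True by (metis measure_empty)
  next
    case False
    then have b': "0 < b" "b \<le> measure M A" using b by auto
    have "(\<lambda>n. measure M (dyadic_sets M A n (dyadic_below (measure M A) b n))) \<longlonglongrightarrow>
        measure M {x\<in>A. v x < b}"
      unfolding level[OF b'] using dyadic_approx(1,2)[OF na A b'] by (rule finite_Lim_measure_incseq)
    then show ?thesis using dyadic_approx(3)[OF na A b'] by (rule LIMSEQ_unique)
  qed
  ultimately show ?thesis using bounds by blast
qed

end

context prob_space
begin

text \<open>A uniformly distributed random variable on a non-atomic probability space whose
  initial segment of length \<open>\<mu>(I)\<close> is \<open>I\<close>: glue a uniform variable on \<open>I\<close> (values in
  \<open>[0, \<mu>(I)]\<close>) to a shifted uniform variable on the complement.\<close>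
lemma uniform_variable:
  assumes na: "nonatomic M" and I: "I \<in> sets M"
  shows "\<exists>u\<in>borel_measurable M. (\<forall>x\<in>space M. u x < measure M I \<longrightarrow> x \<in> I) \<and>
           (\<forall>b. 0 \<le> b \<and> b \<le> 1 \<longrightarrow> measure M {x\<in>space M. u x < b} = b)"
proof -
  define \<delta> where "\<delta> = measure M I"
  have CI: "space M - I \<in> sets M" using I by auto
  have mC: "measure M (space M - I) = 1 - \<delta>" using I by (simp add: prob_compl \<delta>_def)
  obtain v1 where v1m: "v1 \<in> borel_measurable M" and v1b: "\<forall>x\<in>I. 0 \<le> v1 x \<and> v1 x \<le> \<delta>"
    and v1d: "\<forall>b. 0 \<le> b \<and> b \<le> \<delta> \<longrightarrow> measure M {x\<in>I. v1 x < b} = b"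
    using uniform_on_set[OF na I] unfolding \<delta>_def by blast
  obtain v2 where v2m: "v2 \<in> borel_measurable M" and v2b: "\<forall>x\<in>space M - I. 0 \<le> v2 x \<and> v2 x \<le> 1 - \<delta>"
    and v2d: "\<forall>b. 0 \<le> b \<and> b \<le> 1 - \<delta> \<longrightarrow> measure M {x\<in>space M - I. v2 x < b} = b"
    using uniform_on_set[OF na CI] unfolding mC by blast
  define u where "u x = (if x \<in> I then v1 x else \<delta> + v2 x)" for x
  have um: "u \<in> borel_measurable M"
    unfolding u_def using v1m v2m I by measurable
  have initial: "\<forall>x\<in>space M. u x < \<delta> \<longrightarrow> x \<in> I"
  proof (intro ballI impI)
    fix x assume "x \<in> space M" "u x < \<delta>"
    then show "x \<in> I" using v2b by (cases "x \<in> I") (force simp: u_def)+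
  qed
  have uniform: "measure M {x\<in>space M. u x < b} = b" if b: "0 \<le> b" "b \<le> 1" for b
  proof -
    let ?L1 = "{x\<in>I. v1 x < b}" and ?L2 = "{x\<in>space M - I. v2 x < b - \<delta>}"
    have "?L1 = I \<inter> {x\<in>space M. v1 x < b}" using sets.sets_into_space[OF I] by auto
    then have L1: "?L1 \<in> sets M" using I v1m by simp
    have "?L2 = (space M - I) \<inter> {x\<in>space M. v2 x < b - \<delta>}" by auto
    then have L2: "?L2 \<in> sets M" using CI v2m by simp
    have "{x\<in>space M. u x < b} = ?L1 \<union> ?L2"
      using sets.sets_into_space[OF I] by (auto simp: u_def)
    then have "measure M {x\<in>space M. u x < b} = measure M ?L1 + measure M ?L2"
      using L1 L2 by (simp only:) (intro finite_measure_Union, auto)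
    also have "\<dots> = b"
    proof (cases "b \<le> \<delta>")
      case True
      then have "?L2 = {}" using v2b by force
      then have "measure M ?L2 = 0" by (metis measure_empty)
      then show ?thesis using v1d b True by simp
    next
      case False
      then have "?L1 = I" using v1b by force
      then have "measure M ?L1 = \<delta>" unfolding \<delta>_def by (rule arg_cong)
      then show ?thesis using v2d b False by simp
    qed
    finally show ?thesis .
  qed
  show ?thesis using um initial uniform unfolding \<delta>_def by blast
qed

text \<open>A uniformly distributed variable is almost surely positive, so its strict
  sublevel sets keep their measure after discarding \<open>u \<le> 0\<close>.\<close>
lemma uniform_positive_part:
  assumes um: "u \<in> borel_measurable M"
    and ud: "\<forall>b. 0 \<le> b \<and> b \<le> 1 \<longrightarrow> measure M {x\<in>space M. u x < b} = b"
    and b: "0 \<le> b" "b \<le> 1"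
  shows "measure M {x\<in>space M. 0 < u x \<and> u x < b} = b"
proof -
  let ?Z = "{x\<in>space M. u x \<le> 0}" and ?L = "{x\<in>space M. u x < b}"
  have "measure M ?Z \<le> 0 + e" if e: "0 < e" for e
  proof (cases "e \<le> 1")
    case True
    have "measure M ?Z \<le> measure M {x\<in>space M. u x < e}"
      using um e by (intro finite_measure_mono) auto
    then show ?thesis using ud e True by simp
  next
    case False
    then show ?thesis using prob_le_1[of ?Z] by linarith
  qed
  then have Z: "measure M ?Z = 0"
    using field_le_epsilon measure_nonneg[of M ?Z] by (meson antisym)
  have "measure M (?L \<inter> ?Z) \<le> measure M ?Z"
    using um by (intro finite_measure_mono) auto
  then have "measure M (?L \<inter> ?Z) = 0" using Z measure_nonneg[of M "?L \<inter> ?Z"] by linarith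
  moreover have "{x\<in>space M. 0 < u x \<and> u x < b} = ?L - ?Z" by auto
  ultimately show ?thesis
    using um ud b by (simp add: finite_measure_Diff')
qed

end

context sigma_finite_measure
begin

text \<open>Layer-cake representation of the integral of a non-negative function by the
  measures of its superlevel sets (Tonelli on \<open>M \<times> (0,\<infinity>)\<close>).\<close>
lemma layer_cake:
  fixes h :: "'a \<Rightarrow> real"
  assumes hm: "h \<in> borel_measurable M" and hnn: "\<forall>x\<in>space M. 0 \<le> h x"
  shows "(\<integral>\<^sup>+x. ennreal (h x) \<partial>M) =
         (\<integral>\<^sup>+s. indicator {0<..} s * emeasure M {x\<in>space M. s < h x} \<partial>lborel)"
proof -
  interpret pair_sigma_finite M lborel
    by (simp add: pair_sigma_finite.intro sigma_finite_measure_axioms lborel.sigma_finite_measure_axioms)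
  define g where "g x s = (if 0 < s \<and> s < h x then 1 else 0 :: ennreal)" for x s
  have gm: "case_prod g \<in> borel_measurable (M \<Otimes>\<^sub>M lborel)"
    unfolding g_def using hm by measurable
  have "(\<integral>\<^sup>+x. ennreal (h x) \<partial>M) = (\<integral>\<^sup>+x. (\<integral>\<^sup>+s. g x s \<partial>lborel) \<partial>M)"
  proof (rule nn_integral_cong)
    fix x assume x: "x \<in> space M"
    have "(\<lambda>s. g x s) = indicator {0<..<h x}" by (auto simp: g_def indicator_def fun_eq_iff)
    then show "ennreal (h x) = (\<integral>\<^sup>+s. g x s \<partial>lborel)" using hnn x by simp
  qed
  also have "\<dots> = (\<integral>\<^sup>+s. (\<integral>\<^sup>+x. g x s \<partial>M) \<partial>lborel)"
    using Fubini'[OF gm] by simp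
  also have "\<dots> = (\<integral>\<^sup>+s. indicator {0<..} s * emeasure M {x\<in>space M. s < h x} \<partial>lborel)"
  proof (rule nn_integral_cong)
    fix s :: real
    have "{x\<in>space M. s < h x} \<in> sets M" using hm by measurable
    moreover have "(\<integral>\<^sup>+x. g x s \<partial>M) = (\<integral>\<^sup>+x. indicator {x\<in>space M. s < h x} x \<partial>M)" if "0 < s"
      by (rule nn_integral_cong) (auto simp: g_def indicator_def that)
    ultimately show "(\<integral>\<^sup>+x. g x s \<partial>M) = indicator {0<..} s * emeasure M {x\<in>space M. s < h x}"
      by (cases "0 < s") (simp_all add: g_def)
  qed
  finally show ?thesis .
qed

end

lemma powr_le_iff_base:
  fixes x y a :: real
  assumes "0 < a" "0 \<le> x" "0 \<le> y"
  shows "x powr a \<le> y powr a \<longleftrightarrow> x \<le> y"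
  using assms powr_mono2[of a x y] powr_less_mono2[of a y x] by (auto simp: not_le[symmetric])

lemma powr_less_iff_base:
  fixes x y a :: real
  assumes "0 < a" "0 \<le> x" "0 \<le> y"
  shows "x powr a < y powr a \<longleftrightarrow> x < y"
  using powr_le_iff_base[OF assms(1,3,2)] by (simp add: not_le[symmetric])

lemma powr_root_le_iff:
  fixes m c p :: real
  assumes "0 < p" "0 \<le> m" "0 \<le> c"
  shows "m powr (1/p) \<le> c \<longleftrightarrow> m \<le> c powr p"
proof -
  have "m powr (1/p) \<le> c \<longleftrightarrow> (m powr (1/p)) powr p \<le> c powr p"
    using assms by (intro powr_le_iff_base[symmetric]) auto
  also have "(m powr (1/p)) powr p = m" using assms by (simp add: powr_powr)
  finally show ?thesis .
qed

lemma power_level_iff: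
  fixes s t F p :: real
  assumes t: "0 < t" and s: "0 < s" and F: "0 < F" and p: "0 < p"
  shows "s < F * t powr (-1/p) \<longleftrightarrow> t < (F/s) powr p"
proof -
  have "s < F * t powr (-1/p) \<longleftrightarrow> t powr (1/p) < F / s"
    using t s F by (simp add: powr_minus_divide field_simps)
  also have "\<dots> \<longleftrightarrow> (t powr (1/p)) powr p < (F/s) powr p"
    using p s F t by (intro powr_less_iff_base[symmetric]) auto
  also have "(t powr (1/p)) powr p = t" using p t by (simp add: powr_powr)
  finally show ?thesis .
qed

text \<open>The algebra behind the next integral: with crossing point \<open>c = F m^{-1/p}\<close>,
  \<open>m c + F^p c^{1-p}/(p-1) = p/(p-1) F m^{1-1/p}\<close>.\<close>
lemma crossing_point_identity:
  fixes m F p :: real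
  assumes m: "0 < m" and F: "0 < F" and p: "1 < p"
  shows "m * (F * m powr (-1/p)) + F powr p * (F * m powr (-1/p)) powr (1 - p) / (p - 1)
       = p/(p-1) * F * m powr (1 - 1/p)"
proof -
  have mc: "m * (F * m powr (-1/p)) = F * m powr (1 - 1/p)"
    using m by (simp add: powr_diff powr_minus field_simps)
  have "(F * m powr (-1/p)) powr (1 - p) = F powr (1 - p) * m powr ((-1/p) * (1 - p))"
    using F m by (simp add: powr_mult powr_powr)
  also have "(-1/p) * (1 - p) = 1 - 1/p" using p by (simp add: field_simps)
  finally have tail: "F powr p * (F * m powr (-1/p)) powr (1 - p) = F * m powr (1 - 1/p)"
    using F by (simp add: powr_add[symmetric] mult.assoc[symmetric])
  have "\<And>X. F * X + F * X / (p - 1) = p/(p-1) * F * X"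
    using p by (simp add: field_simps)
  then show ?thesis by (simp only: mc tail)
qed

lemma truncated_power_integral:
  fixes m F p :: real
  assumes m: "0 < m" and F: "0 < F" and p: "1 < p"
  shows "(\<integral>\<^sup>+s. indicator {0<..} s * ennreal (min m ((F/s) powr p)) \<partial>lborel)
         = ennreal (p/(p-1) * F * m powr (1 - 1/p))"
proof -
  define c where "c = F * m powr (-1/p)"
  have c0: "0 < c" using F m by (simp add: c_def)
  have Fcp: "(F / c) powr p = m" using F m p by (simp add: c_def powr_minus divide_simps powr_powr)
  text \<open>Below \<open>c\<close> the minimum is \<open>m\<close>, above it is \<open>F^p s^{-p}\<close>.\<close>
  have split: "indicator {0<..} s * ennreal (min m ((F/s) powr p)) =
      ennreal m * indicator {0<..<c} s + ennreal (indicator {c..} s * (F powr p * s powr (-p)))"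
    for s :: real
  proof (cases "0 < s")
    case True
    have "(F/s) powr p = F powr p * s powr (-p)"
      using True F by (simp add: powr_divide powr_minus divide_simps)
    moreover have "(F/s) powr p \<le> m \<longleftrightarrow> c \<le> s"
    proof -
    have "(F/s) powr p \<le> (F/c) powr p \<longleftrightarrow> F/s \<le> F/c"
      using True F c0 p by (intro powr_le_iff_base) auto
    also have "\<dots> \<longleftrightarrow> c \<le> s"
      using True F c0 by (simp add: frac_le_eq divide_le_cancel field_simps)
    finally show ?thesis unfolding Fcp .
  qed
    ultimately show ?thesis using True by (auto simp: indicator_def min_def not_le)
  next
    case False
    then show ?thesis using c0 by (simp add: indicator_def)
  qed
  have tail: "((\<lambda>s. F powr p * s powr (-p)) has_integral F powr p * (c powr (1 - p) / (p - 1))) {c..}"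
  proof -
    have "((\<lambda>s. s powr (-p)) has_integral c powr (1 - p) / (p - 1)) {c..}"
      using has_integral_powr_to_inf[of "-p" c] p c0 by (simp add: minus_divide_right)
    then show ?thesis by (rule has_integral_mult_right)
  qed
  have "(\<integral>\<^sup>+s. indicator {0<..} s * ennreal (min m ((F/s) powr p)) \<partial>lborel)
     = (\<integral>\<^sup>+s. ennreal m * indicator {0<..<c} s \<partial>lborel) +
       (\<integral>\<^sup>+s. ennreal (indicator {c..} s * (F powr p * s powr (-p))) \<partial>lborel)"
    unfolding split by (rule nn_integral_add) auto
  also have "\<dots> = ennreal (m * c) + ennreal (F powr p * (c powr (1 - p) / (p - 1)))"
    using nn_integral_has_integral_lebesgue[OF _ tail] c0 m
    by (simp add: nn_integral_cmult_indicator ennreal_mult)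
  also have "\<dots> = ennreal (p/(p-1) * F * m powr (1 - 1/p))"
    using crossing_point_identity[OF m F p] c0 m p F
    by (subst ennreal_plus[symmetric]) (auto simp: c_def)
  finally show ?thesis .
qed

lemma weak_norm_distribution:
  assumes nonneg: "\<forall>x\<in>space M. 0 \<le> \<phi> x" and weak: "weak_norm M p (\<lambda>x. ennreal \<bar>\<phi> x\<bar>) \<le> ennreal F"
    and p: "0 < p" and F: "0 < F" and s: "0 < s"
  shows "measure M {x\<in>space M. s < \<phi> x} \<le> (F/s) powr p"
proof -
  have "{x\<in>space M. ennreal s < ennreal \<bar>\<phi> x\<bar>} = {x\<in>space M. s < \<phi> x}"
    using nonneg s by (auto simp: ennreal_less_iff)
  then have "ennreal (s * measure M {x\<in>space M. s < \<phi> x} powr (1/p)) \<le> weak_norm M p (\<lambda>x. ennreal \<bar>\<phi> x\<bar>)"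
    unfolding weak_norm_def using s by (intro SUP_upper2[of s]) auto
  also have "\<dots> \<le> ennreal F" by (rule weak)
  finally have "s * measure M {x\<in>space M. s < \<phi> x} powr (1/p) \<le> F"
    using F by (simp add: ennreal_le_iff)
  then have "measure M {x\<in>space M. s < \<phi> x} powr (1/p) \<le> F / s"
    using s by (simp add: field_simps)
  then show ?thesis using p F s by (simp add: powr_root_le_iff)
qed

lemma (in finite_measure) profile_integral:
  assumes \<psi>m: "\<psi> \<in> borel_measurable M" and nonneg: "\<forall>x\<in>space M. 0 \<le> \<psi> x"
    and m: "0 < m" and F: "0 < F" and p: "1 < p"
    and distr: "\<And>s. 0 < s \<Longrightarrow> measure M {x\<in>space M. s < \<psi> x} = min m ((F/s) powr p)"
  shows "(\<integral>\<^sup>+x. ennreal (\<psi> x) \<partial>M) = ennreal (p/(p-1) * F * m powr (1 - 1/p))"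
proof -
  have "(\<integral>\<^sup>+x. ennreal (\<psi> x) \<partial>M) = (\<integral>\<^sup>+s. indicator {0<..} s * emeasure M {x\<in>space M. s < \<psi> x} \<partial>lborel)"
    by (rule layer_cake[OF \<psi>m nonneg])
  also have "\<dots> = (\<integral>\<^sup>+s. indicator {0<..} s * ennreal (min m ((F/s) powr p)) \<partial>lborel)"
    by (rule nn_integral_cong) (auto simp: emeasure_eq_measure distr indicator_def)
  also have "\<dots> = ennreal (p/(p-1) * F * m powr (1 - 1/p))"
    by (rule truncated_power_integral[OF m F p])
  finally show ?thesis .
qed

text \<open>The same profile has weak norm exactly \<open>F\<close>: it is bounded by \<open>F\<close> at every level
  and attains \<open>F\<close> at the level \<open>s = F m^{-1/p}\<close>.\<close>
lemma profile_weak_norm: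
  assumes nonneg: "\<forall>x\<in>space M. 0 \<le> \<phi> x" and m: "0 < m" and F: "0 < F" and p: "1 < p"
    and distr: "\<And>s. 0 < s \<Longrightarrow> measure M {x\<in>space M. s < \<phi> x} = min m ((F/s) powr p)"
  shows "weak_norm M p (\<lambda>x. ennreal \<bar>\<phi> x\<bar>) = ennreal F"
proof -
  have level: "{x\<in>space M. ennreal s < ennreal \<bar>\<phi> x\<bar>} = {x\<in>space M. s < \<phi> x}" if "0 < s" for s
    using that nonneg by (auto simp: ennreal_less_iff)
  have bound: "s * measure M {x\<in>space M. s < \<phi> x} powr (1/p) \<le> F" if s: "0 < s" for s
  proof -
    have "min m ((F/s) powr p) powr (1/p) \<le> F / s"
      using p m F s by (simp add: powr_root_le_iff)
    then have "s * min m ((F/s) powr p) powr (1/p) \<le> s * (F / s)"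
      using s by (intro mult_left_mono) auto
    then show ?thesis using s by (simp add: distr)
  qed
  define s0 where "s0 = F * m powr (-1/p)"
  have s0: "0 < s0" using F m by (simp add: s0_def)
  have "(F/s0) powr p = m" using m F p by (simp add: s0_def powr_minus_divide powr_powr)
  then have "s0 * measure M {x\<in>space M. s0 < \<phi> x} powr (1/p) = s0 * m powr (1/p)"
    using s0 by (simp add: distr)
  also have "\<dots> = F" using m by (simp add: s0_def powr_minus_divide)
  finally have attained: "s0 * measure M {x\<in>space M. s0 < \<phi> x} powr (1/p) = F" .
  show ?thesis unfolding weak_norm_def
  proof (rule antisym)
    show "(SUP t\<in>{0<..}. ennreal (t * measure M {x\<in>space M. ennreal t < ennreal \<bar>\<phi> x\<bar>} powr (1/p))) \<le> ennreal F"
      using bound level by (intro SUP_least) (auto intro: ennreal_leI)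
    show "ennreal F \<le> (SUP t\<in>{0<..}. ennreal (t * measure M {x\<in>space M. ennreal t < ennreal \<bar>\<phi> x\<bar>} powr (1/p)))"
      using attained s0 level by (intro SUP_upper2[of s0]) auto
  qed
qed

lemma (in finite_measure) weak_norm_lower:
  assumes gm: "g \<in> borel_measurable M" and I: "I \<in> sets M" "0 < measure M I"
    and p: "0 < p" and A: "0 < A"
    and big: "\<And>x. x \<in> I \<Longrightarrow> ennreal A \<le> g x"
  shows "ennreal (A * measure M I powr (1/p)) \<le> weak_norm M p g"
proof (rule dense_le_bounded[of 0])
  show "0 < ennreal (A * measure M I powr (1/p))" using A I by simp
  fix w assume w: "0 < w" "w < ennreal (A * measure M I powr (1/p))"
  obtain t where wt: "w = ennreal t" "0 \<le> t"
    using w(2) by (cases w) auto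
  with w have t: "w = ennreal t" "0 < t" "t < A * measure M I powr (1/p)"
    using A I by (auto simp: ennreal_less_iff)
  let ?L = "{x\<in>space M. ennreal (t / measure M I powr (1/p)) < g x}"
  have I_pos: "0 < measure M I powr (1/p)" using I by simp
  have level: "t / measure M I powr (1/p) < A" using t I_pos by (simp add: field_simps)
  have "I \<subseteq> ?L"
  proof
    fix x assume x: "x \<in> I"
    have "ennreal (t / measure M I powr (1/p)) < ennreal A"
      using level t I_pos by (simp add: ennreal_less_iff)
    also have "\<dots> \<le> g x" by (rule big[OF x])
    finally show "x \<in> ?L" using x sets.sets_into_space[OF I(1)] by blast
  qed
  moreover have "?L \<in> sets M" using gm by measurable
  ultimately have "measure M I \<le> measure M ?L" by (rule finite_measure_mono)
  then have "measure M I powr (1/p) \<le> measure M ?L powr (1/p)"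
    using p by (intro powr_mono2) auto
  then have "t / measure M I powr (1/p) * measure M I powr (1/p) \<le>
      t / measure M I powr (1/p) * measure M ?L powr (1/p)"
    using t I_pos by (intro mult_left_mono) auto
  then have "t \<le> t / measure M I powr (1/p) * measure M ?L powr (1/p)"
    using I_pos by simp
  then have "w \<le> ennreal (t / measure M I powr (1/p) * measure M ?L powr (1/p))"
    unfolding t(1) by (rule ennreal_leI)
  also have "\<dots> \<le> weak_norm M p g"
    unfolding weak_norm_def
  proof (rule SUP_upper2)
    show "t / measure M I powr (1/p) \<in> {0<..}" using t I_pos by simp
  qed (rule order_refl)
  finally show "w \<le> weak_norm M p g" .
qed

lemma tree_level_Suc_children:
  "tree_level I C (Suc j) = (\<Union>K\<in>C I. tree_level K C j)"
  by (induction j) auto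

lemma tree_levels_Suc:
  "(\<Union>j\<le>Suc n. tree_level I C j) = {I} \<union> (\<Union>K\<in>C I. \<Union>j\<le>n. tree_level K C j)"
proof -
  have "(\<Union>j\<le>Suc n. tree_level I C j) = tree_level I C 0 \<union> (\<Union>j\<le>n. tree_level I C (Suc j))"
    by (auto simp: atMost_Suc_eq_insert_0 simp del: tree_level.simps)
  also have "\<dots> = {I} \<union> (\<Union>K\<in>C I. \<Union>j\<le>n. tree_level K C j)"
    by (auto simp only: tree_level_Suc_children) auto
  finally show ?thesis .
qed

lemma is_treeD:
  assumes tr: "is_tree M T C" and I: "I \<in> T"
  shows "I \<in> sets M" "0 < measure M I" "finite (C I)" "2 \<le> card (C I)" "C I \<subseteq> T"
    "\<And>J1 J2. J1 \<in> C I \<Longrightarrow> J2 \<in> C I \<Longrightarrow> J1 \<noteq> J2 \<Longrightarrow> measure M (J1 \<inter> J2) = 0"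
    "\<And>J. J \<in> C I \<Longrightarrow> J \<subseteq> I" "\<Union>(C I) = I"
proof -
  from tr have "\<forall>I\<in>T. I \<in> sets M \<and> 0 < measure M I"
    unfolding is_tree_def by (elim conjE) assumption
  moreover from tr have "\<forall>I\<in>T. finite (C I) \<and> 2 \<le> card (C I) \<and> C I \<subseteq> T \<and>
        (\<forall>J1\<in>C I. \<forall>J2\<in>C I. J1 \<noteq> J2 \<longrightarrow> measure M (J1 \<inter> J2) = 0) \<and>
        (\<forall>J\<in>C I. J \<subseteq> I) \<and> \<Union> (C I) = I"
    unfolding is_tree_def by (elim conjE) assumption
  ultimately have "I \<in> sets M \<and> 0 < measure M I" "finite (C I) \<and> 2 \<le> card (C I) \<and> C I \<subseteq> T \<and>
        (\<forall>J1\<in>C I. \<forall>J2\<in>C I. J1 \<noteq> J2 \<longrightarrow> measure M (J1 \<inter> J2) = 0) \<and>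
        (\<forall>J\<in>C I. J \<subseteq> I) \<and> \<Union> (C I) = I"
    using I by simp_all
  then show "I \<in> sets M" "0 < measure M I" "finite (C I)" "2 \<le> card (C I)" "C I \<subseteq> T"
    "\<And>J1 J2. J1 \<in> C I \<Longrightarrow> J2 \<in> C I \<Longrightarrow> J1 \<noteq> J2 \<Longrightarrow> measure M (J1 \<inter> J2) = 0"
    "\<And>J. J \<in> C I \<Longrightarrow> J \<subseteq> I" "\<Union>(C I) = I"
    by simp_all
qed

lemma is_tree_root:
  assumes "is_tree M T C"
  shows "space M \<in> T" "T = (\<Union>m. tree_level (space M) C m)"
proof -
  show "space M \<in> T" using assms unfolding is_tree_def by (elim conjE)
  show "T = (\<Union>m. tree_level (space M) C m)" using assms unfolding is_tree_def by (elim conjE)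
qed

lemma tree_descendants:
  assumes tr: "is_tree M T C" and I: "I \<in> T" and J: "J \<in> tree_level I C j"
  shows "J \<in> T \<and> J \<subseteq> I"
  using J
proof (induction j arbitrary: J)
  case 0
  then show ?case using I by simp
next
  case (Suc j)
  then obtain J' where J': "J' \<in> tree_level I C j" "J \<in> C J'" by auto
  with Suc.IH have "J' \<in> T" "J' \<subseteq> I" by auto
  then show ?case using is_treeD[OF tr \<open>J' \<in> T\<close>] J' by blast
qed

lemma tree_level_finite:
  assumes tr: "is_tree M T C" and I: "I \<in> T"
  shows "finite (tree_level I C j)"
proof (induction j)
  case 0
  then show ?case by simp
next
  case (Suc j)
  have "finite (C J)" if "J \<in> tree_level I C j" for J
    using tree_descendants[OF tr I that] is_treeD(3)[OF tr] by blast
  then show ?case using Suc by simp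
qed

lemma tree_level_nonempty:
  assumes tr: "is_tree M T C"
  shows "tree_level (space M) C m \<noteq> {}"
proof (induction m)
  case 0
  then show ?case by simp
next
  case (Suc m)
  then obtain I where I: "I \<in> tree_level (space M) C m" by blast
  then have "I \<in> T" using tree_descendants[OF tr is_tree_root(1)[OF tr]] by blast
  then have "C I \<noteq> {}" using is_treeD(3,4)[OF tr] by fastforce
  then show ?case using I by auto
qed

lemma tree_countable:
  assumes tr: "is_tree M T C"
  shows "countable T"
  unfolding is_tree_root(2)[OF tr]
  using tree_level_finite[OF tr is_tree_root(1)[OF tr]]
  by (intro countable_UN) (auto intro: countable_finite)

text \<open>Nodes of arbitrarily small positive measure exist: take any node of a deep
  enough generation.\<close>
lemma tree_small_node:
  assumes tr: "is_tree M T C" and a: "0 < a"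
  shows "\<exists>I\<in>T. 0 < measure M I \<and> measure M I \<le> a"
proof -
  have root: "space M \<in> T" by (rule is_tree_root(1)[OF tr])
  have "(\<lambda>m. SUP I\<in>tree_level (space M) C m. measure M I) \<longlonglongrightarrow> 0"
    using tr unfolding is_tree_def by (elim conjE)
  from this a obtain m where m: "(SUP I\<in>tree_level (space M) C m. measure M I) < a"
    by (metis (no_types, lifting) LIMSEQ_le_const linorder_not_le order.refl)
  obtain I where I: "I \<in> tree_level (space M) C m"
    using tree_level_nonempty[OF tr, of m] by blast
  have IT: "I \<in> T" using tree_descendants[OF tr root I] by blast
  have "measure M I \<le> (SUP I\<in>tree_level (space M) C m. measure M I)"
    using I tree_level_finite[OF tr root, of m] by (intro cSUP_upper) (auto intro: bdd_above_finite)
  then show ?thesis using m IT is_treeD(2)[OF tr IT] by (intro bexI[of _ I]) auto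
qed

text \<open>The maximal operator as a supremum over all nodes of indicator-weighted averages,
  which exhibits it as a countable supremum of measurable functions.\<close>
lemma tree_maximal_indicator:
  "tree_maximal M T \<phi> x = (SUP I\<in>T. indicator I x * ennreal ((LINT y:I|M. \<bar>\<phi> y\<bar>) / measure M I))"
  unfolding tree_maximal_def
proof (rule antisym)
  show "(SUP I\<in>{I\<in>T. x \<in> I}. ennreal ((LINT y:I|M. \<bar>\<phi> y\<bar>) / measure M I))
      \<le> (SUP I\<in>T. indicator I x * ennreal ((LINT y:I|M. \<bar>\<phi> y\<bar>) / measure M I))"
    by (rule SUP_least) (auto intro: SUP_upper2)
  show "(SUP I\<in>T. indicator I x * ennreal ((LINT y:I|M. \<bar>\<phi> y\<bar>) / measure M I))
      \<le> (SUP I\<in>{I\<in>T. x \<in> I}. ennreal ((LINT y:I|M. \<bar>\<phi> y\<bar>) / measure M I))"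
    by (rule SUP_least) (auto simp: indicator_def intro: SUP_upper2)
qed

lemma tree_maximal_measurable:
  assumes tr: "is_tree M T C"
  shows "tree_maximal M T \<phi> \<in> borel_measurable M"
proof -
  have "(\<lambda>x. SUP I\<in>T. indicator I x * ennreal ((LINT y:I|M. \<bar>\<phi> y\<bar>) / measure M I)) \<in> borel_measurable M"
  proof (rule borel_measurable_SUP)
    show "countable T" by (rule tree_countable[OF tr])
    fix I assume "I \<in> T"
    then have [measurable]: "I \<in> sets M" by (rule is_treeD(1)[OF tr])
    show "(\<lambda>x. indicator I x * ennreal ((LINT y:I|M. \<bar>\<phi> y\<bar>) / measure M I)) \<in> borel_measurable M"
      by measurable
  qed
  then show ?thesis by (simp add: tree_maximal_indicator[abs_def])
qed

lemma set_integral_abs_nn: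
  assumes \<phi>: "integrable M \<phi>" and J: "J \<in> sets M"
  shows "ennreal (LINT y:J|M. \<bar>\<phi> y\<bar>) = (\<integral>\<^sup>+y. ennreal \<bar>\<phi> y\<bar> * indicator J y \<partial>M)"
proof -
  have int: "integrable M (\<lambda>y. indicator J y *\<^sub>R \<bar>\<phi> y\<bar>)"
    by (rule integrable_mult_indicator[OF J integrable_abs[OF \<phi>]])
  have "(\<integral>\<^sup>+y. ennreal (indicator J y *\<^sub>R \<bar>\<phi> y\<bar>) \<partial>M) = ennreal (integral\<^sup>L M (\<lambda>y. indicator J y *\<^sub>R \<bar>\<phi> y\<bar>))"
    by (rule nn_integral_eq_integral[OF int]) (auto simp: indicator_def)
  moreover have "(\<lambda>y. ennreal (indicator J y *\<^sub>R \<bar>\<phi> y\<bar>)) = (\<lambda>y. ennreal \<bar>\<phi> y\<bar> * indicator J y)"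
    by (auto simp: indicator_def fun_eq_iff)
  ultimately show ?thesis by (simp add: set_lebesgue_integral_def)
qed

context finite_measure
begin

lemma nn_integral_ae_disjoint_UN:
  fixes g :: "'a \<Rightarrow> ennreal"
  assumes fin: "finite \<K>" and S: "\<And>K. K \<in> \<K> \<Longrightarrow> S K \<in> sets M \<and> S K \<subseteq> K"
    and ad: "\<And>K1 K2. K1 \<in> \<K> \<Longrightarrow> K2 \<in> \<K> \<Longrightarrow> K1 \<noteq> K2 \<Longrightarrow> measure M (K1 \<inter> K2) = 0"
    and Ks: "\<And>K. K \<in> \<K> \<Longrightarrow> K \<in> sets M" and gm: "g \<in> borel_measurable M"
  shows "(\<integral>\<^sup>+x. g x * indicator (\<Union>K\<in>\<K>. S K) x \<partial>M) = (\<Sum>K\<in>\<K>. \<integral>\<^sup>+x. g x * indicator (S K) x \<partial>M)"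
proof -
  define N where "N = (\<Union>K1\<in>\<K>. \<Union>K2\<in>\<K> - {K1}. K1 \<inter> K2)"
  have "N \<in> null_sets M"
    unfolding N_def
  proof (intro null_sets_UN' countable_finite fin finite_Diff)
    fix K1 K2 assume "K1 \<in> \<K>" "K2 \<in> \<K> - {K1}"
    then show "K1 \<inter> K2 \<in> null_sets M" using ad Ks
      by (auto simp: null_sets_def emeasure_eq_measure)
  qed
  then have ae: "AE x in M. x \<notin> N" by (rule AE_not_in)
  text \<open>Off \<open>N\<close> a point lies in at most one \<open>S K\<close>.\<close>
  have pointwise: "indicator (\<Union>K\<in>\<K>. S K) x = (\<Sum>K\<in>\<K>. indicator (S K) x :: ennreal)"
    if x: "x \<notin> N" for x
  proof (cases "\<exists>K0\<in>\<K>. x \<in> S K0")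
    case True
    then obtain K0 where K0: "K0 \<in> \<K>" "x \<in> S K0" by blast
    have "x \<notin> S K" if "K \<in> \<K>" "K \<noteq> K0" for K
      using that S[of K] S[OF K0(1)] K0 x unfolding N_def by blast
    then have "(\<Sum>K\<in>\<K>. indicator (S K) x :: ennreal) = (\<Sum>K\<in>\<K>. if K = K0 then 1 else 0)"
      using K0 by (intro sum.cong) auto
    also have "\<dots> = 1" using fin K0 by simp
    finally show ?thesis using True by simp
  next
    case False
    then show ?thesis by simp
  qed
  have "(\<integral>\<^sup>+x. g x * indicator (\<Union>K\<in>\<K>. S K) x \<partial>M) = (\<integral>\<^sup>+x. (\<Sum>K\<in>\<K>. g x * indicator (S K) x) \<partial>M)"
    by (rule nn_integral_cong_AE) (use ae pointwise in \<open>auto simp: sum_distrib_left\<close>)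
  also have "\<dots> = (\<Sum>K\<in>\<K>. \<integral>\<^sup>+x. g x * indicator (S K) x \<partial>M)"
  proof (rule nn_integral_sum)
    fix K assume "K \<in> \<K>"
    then have [measurable]: "S K \<in> sets M" using S by blast
    show "(\<lambda>x. g x * indicator (S K) x) \<in> borel_measurable M" using gm by measurable
  qed
  finally show ?thesis .
qed

end

definition above_level :: "'a measure \<Rightarrow> real \<Rightarrow> ('a \<Rightarrow> real) \<Rightarrow> 'a set \<Rightarrow> bool" where
  "above_level M t \<phi> J \<longleftrightarrow> ennreal t < ennreal ((LINT y:J|M. \<bar>\<phi> y\<bar>) / measure M J)"

text \<open>The union of the nodes of the first \<open>n\<close> generations below \<open>I\<close> on which the
  average exceeds \<open>t\<close>; as \<open>n \<rightarrow> \<infinity>\<close> it exhausts the level set of the maximal operator.\<close>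
definition stopping_union ::
    "'a measure \<Rightarrow> ('a set \<Rightarrow> 'a set set) \<Rightarrow> real \<Rightarrow> ('a \<Rightarrow> real) \<Rightarrow> 'a set \<Rightarrow> nat \<Rightarrow> 'a set" where
  "stopping_union M C t \<phi> I n = \<Union>{J \<in> (\<Union>j\<le>n. tree_level I C j). above_level M t \<phi> J}"

lemma stopping_union_0:
  "stopping_union M C t \<phi> I 0 = (if above_level M t \<phi> I then I else {})"
  by (auto simp: stopping_union_def)

lemma stopping_union_Suc:
  "stopping_union M C t \<phi> I (Suc n) =
     (if above_level M t \<phi> I then I else {}) \<union> (\<Union>K\<in>C I. stopping_union M C t \<phi> K n)"
  unfolding stopping_union_def tree_levels_Suc by auto

lemma stopping_union_mono: "stopping_union M C t \<phi> I n \<subseteq> stopping_union M C t \<phi> I (Suc n)"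
  unfolding stopping_union_def by (auto intro: le_SucI)

context finite_measure
begin

lemma above_level_bound:
  assumes \<phi>: "integrable M \<phi>" and J: "J \<in> sets M" "0 < measure M J" and t: "0 < t"
    and above: "above_level M t \<phi> J"
  shows "ennreal t * emeasure M J \<le> (\<integral>\<^sup>+y. ennreal \<bar>\<phi> y\<bar> * indicator J y \<partial>M)"
proof -
  have "t < (LINT y:J|M. \<bar>\<phi> y\<bar>) / measure M J"
    using above t by (simp add: above_level_def ennreal_less_iff)
  then have "t * measure M J \<le> (LINT y:J|M. \<bar>\<phi> y\<bar>)" using J by (simp add: field_simps)
  then have "ennreal (t * measure M J) \<le> ennreal (LINT y:J|M. \<bar>\<phi> y\<bar>)" by (rule ennreal_leI)
  then show ?thesis
    using t by (simp add: set_integral_abs_nn[OF \<phi> J(1)] emeasure_eq_measure ennreal_mult)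
qed

text \<open>Calder\'on--Zygmund estimate: the stopping union is a disjoint union of nodes on
  which \<open>|\<phi>|\<close> has average above \<open>t\<close>, so \<open>t \<mu>(G) \<le> \<integral>\<^sub>G |\<phi>|\<close>.\<close>
lemma stopping_union_bound:
  assumes tr: "is_tree M T C" and \<phi>: "integrable M \<phi>" and t: "0 < t" and I: "I \<in> T"
  shows "stopping_union M C t \<phi> I n \<in> sets M \<and> stopping_union M C t \<phi> I n \<subseteq> I \<and>
     ennreal t * emeasure M (stopping_union M C t \<phi> I n) \<le>
       (\<integral>\<^sup>+y. ennreal \<bar>\<phi> y\<bar> * indicator (stopping_union M C t \<phi> I n) y \<partial>M)"
  using I
proof (induction n arbitrary: I)
  case 0
  then show ?case
    using above_level_bound[OF \<phi> is_treeD(1,2)[OF tr 0] t] is_treeD(1)[OF tr 0]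
    by (simp add: stopping_union_0)
next
  case (Suc n)
  let ?G = "\<lambda>K. stopping_union M C t \<phi> K n"
  have IH: "?G K \<in> sets M \<and> ?G K \<subseteq> K \<and>
      ennreal t * emeasure M (?G K) \<le> (\<integral>\<^sup>+y. ennreal \<bar>\<phi> y\<bar> * indicator (?G K) y \<partial>M)"
    if "K \<in> C I" for K
    using Suc.IH is_treeD(5)[OF tr Suc.prems] that by blast
  have children: "K \<in> sets M" if "K \<in> C I" for K
    using is_treeD(5)[OF tr Suc.prems] that is_treeD(1)[OF tr] by blast
  have sub: "(\<Union>K\<in>C I. ?G K) \<subseteq> I" using IH is_treeD(7)[OF tr Suc.prems] by blast
  show ?case
  proof (cases "above_level M t \<phi> I")
    case True
    then have "stopping_union M C t \<phi> I (Suc n) = I"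
      using sub by (auto simp: stopping_union_Suc)
    then show ?thesis
      using above_level_bound[OF \<phi> is_treeD(1,2)[OF tr Suc.prems] t True] is_treeD(1)[OF tr Suc.prems]
      by simp
  next
    case False
    then have eq: "stopping_union M C t \<phi> I (Suc n) = (\<Union>K\<in>C I. ?G K)"
      by (simp add: stopping_union_Suc)
    note additive = nn_integral_ae_disjoint_UN[OF is_treeD(3)[OF tr Suc.prems] _ is_treeD(6)[OF tr Suc.prems] children]
    have meas: "(\<Union>K\<in>C I. ?G K) \<in> sets M" using IH is_treeD(3)[OF tr Suc.prems] by blast
    have "emeasure M (\<Union>K\<in>C I. ?G K) = (\<Sum>K\<in>C I. emeasure M (?G K))"
      using additive[of ?G "\<lambda>_. 1"] IH meas by simp
    then have "ennreal t * emeasure M (\<Union>K\<in>C I. ?G K) = (\<Sum>K\<in>C I. ennreal t * emeasure M (?G K))"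
      by (simp add: sum_distrib_left)
    also have "\<dots> \<le> (\<Sum>K\<in>C I. \<integral>\<^sup>+y. ennreal \<bar>\<phi> y\<bar> * indicator (?G K) y \<partial>M)"
      using IH by (intro sum_mono) blast
    also have "\<dots> = (\<integral>\<^sup>+y. ennreal \<bar>\<phi> y\<bar> * indicator (\<Union>K\<in>C I. ?G K) y \<partial>M)"
      using IH \<phi> by (intro additive[symmetric]) auto
    finally show ?thesis using eq meas sub by simp
  qed
qed

end

lemma maximal_level_set:
  assumes tr: "is_tree M T C" and t: "0 < t"
  shows "{x\<in>space M. ennreal t < tree_maximal M T \<phi> x} = (\<Union>n. stopping_union M C t \<phi> (space M) n)"
proof (intro equalityI subsetI)
  fix x assume "x \<in> {x\<in>space M. ennreal t < tree_maximal M T \<phi> x}"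
  then obtain J where J: "J \<in> T" "x \<in> J" "above_level M t \<phi> J"
    by (auto simp: tree_maximal_def less_SUP_iff above_level_def)
  then obtain m where "J \<in> tree_level (space M) C m" using is_tree_root(2)[OF tr] by blast
  then show "x \<in> (\<Union>n. stopping_union M C t \<phi> (space M) n)"
    using J unfolding stopping_union_def by blast
next
  fix x assume "x \<in> (\<Union>n. stopping_union M C t \<phi> (space M) n)"
  then obtain J j where J: "J \<in> tree_level (space M) C j" "above_level M t \<phi> J" "x \<in> J"
    unfolding stopping_union_def by blast
  then have JT: "J \<in> T" using is_tree_root(2)[OF tr] by blast
  then have "J \<subseteq> space M" using is_treeD(1)[OF tr JT] sets.sets_into_space by blast
  moreover have "ennreal t < tree_maximal M T \<phi> x"
    unfolding tree_maximal_def less_SUP_iff using J JT by (auto simp: above_level_def)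
  ultimately show "x \<in> {x\<in>space M. ennreal t < tree_maximal M T \<phi> x}" using J by blast
qed

context finite_measure
begin

text \<open>A function with weak norm at most \<open>F\<close> has integral at most
  \<open>p/(p-1) F \<mu>(G)^{1-1/p}\<close> over any set \<open>G\<close> (layer cake plus the distribution bound).\<close>
lemma weak_local_integral:
  assumes p: "1 < p" and F: "0 < F" and \<phi>m: "\<phi> \<in> borel_measurable M"
    and nonneg: "\<forall>x\<in>space M. 0 \<le> \<phi> x"
    and distr: "\<And>s. 0 < s \<Longrightarrow> measure M {x\<in>space M. s < \<phi> x} \<le> (F/s) powr p"
    and G: "G \<in> sets M" "0 < measure M G"
  shows "(\<integral>\<^sup>+y. ennreal \<bar>\<phi> y\<bar> * indicator G y \<partial>M) \<le> ennreal (p/(p-1) * F * measure M G powr (1 - 1/p))"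
proof -
  define h where "h y = \<phi> y * indicator G y" for y
  have hm: "h \<in> borel_measurable M" unfolding h_def using \<phi>m G by measurable
  have hnn: "\<forall>x\<in>space M. 0 \<le> h x" using nonneg by (auto simp: h_def indicator_def)
  have level: "measure M {x\<in>space M. s < h x} \<le> min (measure M G) ((F/s) powr p)" if s: "0 < s" for s
  proof -
    have eq: "{x\<in>space M. s < h x} = G \<inter> {x\<in>space M. s < \<phi> x}"
      using s by (auto simp: h_def indicator_def)
    have "{x\<in>space M. s < \<phi> x} \<in> sets M" using \<phi>m by measurable
    then have "measure M (G \<inter> {x\<in>space M. s < \<phi> x}) \<le> measure M G"
      "measure M (G \<inter> {x\<in>space M. s < \<phi> x}) \<le> measure M {x\<in>space M. s < \<phi> x}"
      using G by (auto intro!: finite_measure_mono)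
    then show ?thesis using distr[OF s] unfolding eq by linarith
  qed
  have "(\<integral>\<^sup>+y. ennreal \<bar>\<phi> y\<bar> * indicator G y \<partial>M) = (\<integral>\<^sup>+y. ennreal (h y) \<partial>M)"
    by (rule nn_integral_cong) (use nonneg in \<open>auto simp: h_def indicator_def\<close>)
  also have "\<dots> = (\<integral>\<^sup>+s. indicator {0<..} s * emeasure M {x\<in>space M. s < h x} \<partial>lborel)"
    by (rule layer_cake[OF hm hnn])
  also have "\<dots> \<le> (\<integral>\<^sup>+s. indicator {0<..} s * ennreal (min (measure M G) ((F/s) powr p)) \<partial>lborel)"
    using level by (intro nn_integral_mono)
      (auto simp: indicator_def emeasure_eq_measure intro!: ennreal_leI)
  also have "\<dots> = ennreal (p/(p-1) * F * measure M G powr (1 - 1/p))"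
    by (rule truncated_power_integral[OF G(2) F p])
  finally show ?thesis .
qed

text \<open>Distribution bound for the maximal function: on each stopping union
  \<open>t \<mu>(G) \<le> \<integral>\<^sub>G \<phi> \<le> p/(p-1) F \<mu>(G)^{1-1/p}\<close>, i.e. \<open>\<mu>(G) \<le> (p/(p-1) F / t)^p\<close>,
  and the level set is the increasing union of these sets.\<close>
lemma maximal_distribution:
  assumes tr: "is_tree M T C" and p: "1 < p" and F: "0 < F" and \<phi>: "integrable M \<phi>"
    and nonneg: "\<forall>x\<in>space M. 0 \<le> \<phi> x"
    and weak: "weak_norm M p (\<lambda>x. ennreal \<bar>\<phi> x\<bar>) \<le> ennreal F" and t: "0 < t"
  shows "measure M {x\<in>space M. ennreal t < tree_maximal M T \<phi> x} \<le> (p/(p-1) * F / t) powr p"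
proof -
  define k where "k = p/(p-1)"
  have k: "0 < k" "1 - 1/p = 1/k" using p by (auto simp: k_def field_simps)
  define G where "G n = stopping_union M C t \<phi> (space M) n" for n
  have G: "G n \<in> sets M" and CZ: "ennreal t * emeasure M (G n) \<le> (\<integral>\<^sup>+y. ennreal \<bar>\<phi> y\<bar> * indicator (G n) y \<partial>M)"
    for n using stopping_union_bound[OF tr \<phi> t is_tree_root(1)[OF tr]] unfolding G_def by blast+
  have each: "measure M (G n) \<le> (k * F / t) powr p" for n
  proof (cases "measure M (G n) = 0")
    case False
    define m where "m = measure M (G n)"
    have m: "0 < m" using False by (simp add: m_def zero_less_measure_iff)
    have "ennreal (t * m) \<le> ennreal (k * F * m powr (1 - 1/p))"
      using CZ[of n] weak_local_integral[OF p F _ nonneg _ G[of n]] weak_norm_distribution[OF nonneg weak _ F] m t p \<phi>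
      by (force simp: m_def emeasure_eq_measure ennreal_mult k_def)
    then have le: "t * m \<le> k * F * m powr (1 - 1/p)"
      using k F by (subst (asm) ennreal_le_iff) auto
    have "m powr (1/p) * m powr (1 - 1/p) = m" using m by (simp add: powr_add[symmetric])
    then have "t * m powr (1/p) * m powr (1 - 1/p) \<le> k * F * m powr (1 - 1/p)"
      using le by (simp only: mult.assoc)
    then have "t * m powr (1/p) \<le> k * F" using m by simp
    then have "m powr (1/p) \<le> k * F / t" using t by (simp add: field_simps)
    then show ?thesis using p k F t m by (simp add: m_def[symmetric] powr_root_le_iff)
  qed simp
  have "(\<lambda>n. measure M (G n)) \<longlonglongrightarrow> measure M (\<Union>n. G n)"
  proof (rule finite_Lim_measure_incseq)
    show "range G \<subseteq> sets M" using G by blast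
    show "incseq G" unfolding G_def by (rule incseq_SucI) (rule stopping_union_mono)
  qed
  then have "measure M (\<Union>n. G n) \<le> (k * F / t) powr p"
    by (rule LIMSEQ_le_const2) (use each in blast)
  then show ?thesis
    unfolding maximal_level_set[OF tr t] G_def k_def .
qed

lemma maximal_weak_bound:
  assumes tr: "is_tree M T C" and p: "1 < p" and F: "0 < F" and \<phi>: "integrable M \<phi>"
    and nonneg: "\<forall>x\<in>space M. 0 \<le> \<phi> x"
    and weak: "weak_norm M p (\<lambda>x. ennreal \<bar>\<phi> x\<bar>) \<le> ennreal F"
  shows "weak_norm M p (tree_maximal M T \<phi>) \<le> ennreal (p/(p-1) * F)"
  unfolding weak_norm_def
proof (rule SUP_least)
  fix t :: real assume "t \<in> {0<..}"
  then have t: "0 < t" by simp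
  let ?m = "measure M {x\<in>space M. ennreal t < tree_maximal M T \<phi> x}"
  have "?m powr (1/p) \<le> p/(p-1) * F / t"
    using maximal_distribution[OF tr p F \<phi> nonneg weak t] p F t by (simp add: powr_root_le_iff)
  then have "t * ?m powr (1/p) \<le> t * (p/(p-1) * F / t)"
    using t by (intro mult_left_mono) auto
  then have "t * ?m powr (1/p) \<le> p/(p-1) * F"
    using t by simp
  then show "ennreal (t * ?m powr (1/p)) \<le> ennreal (p/(p-1) * F)"
    by (rule ennreal_leI)
qed

end

text \<open>The extremal function \<open>F u^{-1/p}\<close> on \<open>{0 < u < a}\<close>, built from a uniformly
  distributed variable \<open>u\<close>; its distribution function is the truncated profile.\<close>
definition extremal :: "('a \<Rightarrow> real) \<Rightarrow> real \<Rightarrow> real \<Rightarrow> real \<Rightarrow> 'a \<Rightarrow> real" where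
  "extremal u a F p x = (if 0 < u x \<and> u x < a then F * u x powr (-1/p) else 0)"

context prob_space
begin

lemma extremal_function:
  assumes um: "u \<in> borel_measurable M"
    and ud: "\<forall>b. 0 \<le> b \<and> b \<le> 1 \<longrightarrow> measure M {x\<in>space M. u x < b} = b"
    and a: "0 < a" "a \<le> 1" and F: "0 < F" and p: "1 < p"
  shows "extremal u a F p \<in> borel_measurable M" "\<forall>x\<in>space M. 0 \<le> extremal u a F p x"
    and "\<And>s. 0 < s \<Longrightarrow> measure M {x\<in>space M. s < extremal u a F p x} = min a ((F/s) powr p)"
proof -
  show "extremal u a F p \<in> borel_measurable M"
    unfolding extremal_def using um by measurable
  show "\<forall>x\<in>space M. 0 \<le> extremal u a F p x" using F by (auto simp: extremal_def)
  fix s :: real assume s: "0 < s"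
  have "{x\<in>space M. s < extremal u a F p x} = {x\<in>space M. 0 < u x \<and> u x < min a ((F/s) powr p)}"
    using s power_level_iff[of _ s F p] F p by (auto simp: extremal_def)
  then show "measure M {x\<in>space M. s < extremal u a F p x} = min a ((F/s) powr p)"
    using a by (simp only:) (rule uniform_positive_part[OF um ud], auto)
qed

text \<open>If \<open>I\<close> contains the initial segment \<open>{u < \<mu>(I)}\<close>, the average of the extremal
  function over \<open>I\<close> is at least \<open>p/(p-1) F \<mu>(I)^{-1/p}\<close>: already the part of the
  integral coming from \<open>{u < \<mu>(I)}\<close> is that large.\<close>
lemma extremal_average:
  assumes um: "u \<in> borel_measurable M"
    and ud: "\<forall>b. 0 \<le> b \<and> b \<le> 1 \<longrightarrow> measure M {x\<in>space M. u x < b} = b"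
    and I: "I \<in> sets M" "0 < measure M I" "measure M I \<le> a" and a: "a \<le> 1"
    and initial: "\<forall>x\<in>space M. u x < measure M I \<longrightarrow> x \<in> I"
    and F: "0 < F" and p: "1 < p"
  shows "p/(p-1) * F * measure M I powr (-1/p) \<le> (LINT y:I|M. \<bar>extremal u a F p y\<bar>) / measure M I"
proof -
  let ?\<delta> = "measure M I" and ?k = "p/(p-1)"
  note small = extremal_function[OF um ud I(2) order_trans[OF I(3) a] F p]
  note large = extremal_function[OF um ud order_less_le_trans[OF I(2,3)] a F p]
  have "ennreal (?k * F * ?\<delta> powr (1 - 1/p)) = (\<integral>\<^sup>+x. ennreal (extremal u ?\<delta> F p x) \<partial>M)"
    using profile_integral[OF small(1,2) I(2) F p small(3)] by simp
  also have "\<dots> \<le> (\<integral>\<^sup>+x. ennreal \<bar>extremal u a F p x\<bar> * indicator I x \<partial>M)"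
    using initial I(3) by (intro nn_integral_mono) (auto simp: extremal_def indicator_def)
  also have "\<dots> = ennreal (LINT y:I|M. \<bar>extremal u a F p y\<bar>)"
  proof -
    have "integrable M (extremal u a F p)"
      using profile_integral[OF large(1,2) order_less_le_trans[OF I(2,3)] F p large(3)] large(1,2)
      by (intro integrableI_nn_integral_finite) (auto intro: AE_I2)
    then show ?thesis by (rule set_integral_abs_nn[OF _ I(1), symmetric])
  qed
  finally have le: "?k * F * ?\<delta> powr (1 - 1/p) \<le> (LINT y:I|M. \<bar>extremal u a F p y\<bar>)"
    by (subst (asm) ennreal_le_iff) (auto intro: integral_nonneg_AE simp: set_lebesgue_integral_def)
  have "?\<delta> powr (1 - 1/p) = ?\<delta> powr 1 * ?\<delta> powr (-1/p)"
    by (simp only: powr_add[symmetric]) simp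
  then have eq: "?k * F * ?\<delta> powr (-1/p) = ?k * F * ?\<delta> powr (1 - 1/p) / ?\<delta>"
    using I(2) by simp
  show ?thesis unfolding eq using le I(2) by (intro divide_right_mono) auto
qed

text \<open>Take the extremal function with support parameter
  \<open>a = (f/(kF))^k\<close> built from a uniform variable whose initial segment of length
  \<open>\<mu>(I)\<close> is a small tree node \<open>I\<close>; the maximal function is large on \<open>I\<close>.\<close>
lemma maximal_extremal_example:
  assumes na: "nonatomic M" and tr: "is_tree M T C" and p: "1 < p" and F: "0 < F"
    and f: "0 < f" "f \<le> p/(p-1) * F"
  shows "\<exists>\<phi>. integrable M \<phi> \<and> (\<forall>x\<in>space M. 0 \<le> \<phi> x) \<and> (\<integral>x. \<phi> x \<partial>M) = f \<and>
      weak_norm M p (\<lambda>x. ennreal \<bar>\<phi> x\<bar>) = ennreal F \<and>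
      ennreal (p/(p-1) * F) \<le> weak_norm M p (tree_maximal M T \<phi>)"
proof -
  define k where "k = p/(p-1)"
  have k: "0 < k" "1 - 1/p = 1/k" using p by (auto simp: k_def field_simps)
  define a where "a = (f / (k * F)) powr k"
  have ratio: "0 < f / (k * F)" "f / (k * F) \<le> 1"
    using f k F by (auto simp: k_def[symmetric] divide_le_eq_1)
  have a: "0 < a" "a \<le> 1" unfolding a_def using ratio k by (auto intro: powr_le1)
  have fa: "k * F * a powr (1 - 1/p) = f"
    unfolding k(2) a_def using ratio k F f(1) by (simp add: powr_powr)
  obtain I where IT: "I \<in> T" and I: "0 < measure M I" "measure M I \<le> a"
    using tree_small_node[OF tr a(1)] by blast
  have Is: "I \<in> sets M" by (rule is_treeD(1)[OF tr IT])
  obtain u where um: "u \<in> borel_measurable M" and initial: "\<forall>x\<in>space M. u x < measure M I \<longrightarrow> x \<in> I"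
    and ud: "\<forall>b. 0 \<le> b \<and> b \<le> 1 \<longrightarrow> measure M {x\<in>space M. u x < b} = b"
    using uniform_variable[OF na Is] by blast
  define \<phi> where "\<phi> = extremal u a F p"
  note \<phi> = extremal_function[OF um ud a F p, folded \<phi>_def]
  have nn: "(\<integral>\<^sup>+x. ennreal (\<phi> x) \<partial>M) = ennreal f"
    using profile_integral[OF \<phi>(1,2) a(1) F p \<phi>(3)] fa by (simp add: k_def)
  have int: "integrable M \<phi>"
    using \<phi>(1,2) nn by (intro integrableI_nn_integral_finite) (auto intro: AE_I2)
  have "(\<integral>x. \<phi> x \<partial>M) = f"
    using integral_eq_nn_integral[OF \<phi>(1)] \<phi>(2) nn f by (simp add: AE_I2)
  moreover have "weak_norm M p (\<lambda>x. ennreal \<bar>\<phi> x\<bar>) = ennreal F"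
    by (rule profile_weak_norm[OF \<phi>(2) a(1) F p \<phi>(3)])
  moreover have "ennreal (k * F) \<le> weak_norm M p (tree_maximal M T \<phi>)"
  proof -
    let ?A = "k * F * measure M I powr (-1/p)"
    have "ennreal ?A \<le> tree_maximal M T \<phi> x" if "x \<in> I" for x
    proof -
      have "?A \<le> (LINT y:I|M. \<bar>\<phi> y\<bar>) / measure M I"
        unfolding \<phi>_def k_def by (rule extremal_average[OF um ud Is I a(2) initial F p])
      then have "ennreal ?A \<le> ennreal ((LINT y:I|M. \<bar>\<phi> y\<bar>) / measure M I)" by (rule ennreal_leI)
      also have "\<dots> \<le> tree_maximal M T \<phi> x"
        unfolding tree_maximal_def using IT that by (intro SUP_upper) auto
      finally show ?thesis .
    qed
    then have "ennreal (?A * measure M I powr (1/p)) \<le> weak_norm M p (tree_maximal M T \<phi>)"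
      using k F I p by (intro weak_norm_lower[OF tree_maximal_measurable[OF tr] Is I(1)]) auto
    moreover have "measure M I powr (-1/p) * measure M I powr (1/p) = 1"
      using I(1) by (simp flip: powr_add)
    ultimately show ?thesis by (simp only: mult.assoc mult_1_right)
  qed
  ultimately show ?thesis using int \<phi>(2) unfolding k_def by blast
qed

end

theorem corollary4p2:
  fixes M :: "'a measure" and T :: "'a set set" and C :: "'a set \<Rightarrow> 'a set set"
    and p k f F :: real
  assumes "prob_space M" and "nonatomic M" and "is_tree M T C"
    and "p > 1" and "k = p / (p - 1)" and "F > 0" and "0 < f" and "f \<le> k * F"
  shows "(SUP \<phi>\<in>{\<phi>. integrable M \<phi> \<and> (\<forall>x\<in>space M. 0 \<le> \<phi> x) \<and>
                      (\<integral>x. \<phi> x \<partial>M) = f \<and>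
                      weak_norm M p (\<lambda>x. ennreal \<bar>\<phi> x\<bar>) = ennreal F}.
            weak_norm M p (tree_maximal M T \<phi>)) = ennreal (k * F)"
    (is "(SUP \<phi>\<in>?A. _) = _")
proof (rule antisym)
  interpret prob_space M by fact
  show "(SUP \<phi>\<in>?A. weak_norm M p (tree_maximal M T \<phi>)) \<le> ennreal (k * F)"
    using maximal_weak_bound[OF assms(3,4,6)] assms(5) by (intro SUP_least) auto
  obtain \<phi> where "\<phi> \<in> ?A" "ennreal (k * F) \<le> weak_norm M p (tree_maximal M T \<phi>)"
    using maximal_extremal_example[OF assms(2,3,4,6,7)] assms(5,8) by auto
  then show "ennreal (k * F) \<le> (SUP \<phi>\<in>?A. weak_norm M p (tree_maximal M T \<phi>))"
    by (rule SUP_upper2[where f = "\<lambda>\<phi>. weak_norm M p (tree_maximal M T \<phi>)"])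
qed

end
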